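(* Let $r\ge 2$ and $s_r\ge\cdots\ge s_1\ge 2$ be integers, $\alpha$ a real number with $0\le \alpha<1/s_1$, $s:=s_1+\cdots+s_r$, and $\mathbb{K}:=K^r_{s_1,\ldots,s_r}$. There is $n_0$ such that for all $n\ge n_0$ the following holds. If $\mathcal{H}$ is an $m$ by $n$ semibipartite $r$-graph on $V_1,V_2$ satisfying $$m \le \frac{(1-\alpha s_1)s_1}{(r-1)(s-s_1)}\,n \quad\text{and}\quad d_{\mathcal{H}}(v)\ge (1-\alpha)\binom{n}{r-1}\ \text{for all } v\in V_1,$$ then $\mathcal{H}$ contains $\lfloor m/s_1\rfloor$ pairwise vertex-disjoint ordered copies of $\mathbb{K}$.
   Context: An $r$-graph is a set of $r$-element subsets (edges) of a finite vertex set; $d_{\mathcal{H}}(v)$ is the number of edges containing $v$. An $m$ by $n$ semibipartite $r$-graph on $V_1,V_2$ has vertex set $V_1\cup V_2$ (disjoint), $|V_1|=m$, $|V_2|=n$, and every edge contains exactly one vertex of $V_1$. $K^r_{s_1,\ldots,s_r}$ is the complete $r$-partite $r$-graph with parts $W_1,\ldots,W_r$ of sizes $s_1,\ldots,s_r$. An ordered copy of it in a semibipartite $r$-graph on $V_1,V_2$ is a copy with $W_1\subseteq V_1$ and $W_2,\ldots,W_r\subseteq V_2$. *)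

theory Defs
  imports Complex_Main
begin

definition r_graph :: "nat \<Rightarrow> 'a set \<Rightarrow> 'a set set \<Rightarrow> bool" where
  "r_graph r V H \<longleftrightarrow> finite V \<and> (\<forall>e\<in>H. e \<subseteq> V \<and> card e = r)"

definition degree :: "'a set set \<Rightarrow> 'a \<Rightarrow> nat" where
  "degree H v = card {e \<in> H. v \<in> e}"

definition semibipartite :: "nat \<Rightarrow> nat \<Rightarrow> nat \<Rightarrow> 'a set \<Rightarrow> 'a set \<Rightarrow> 'a set set \<Rightarrow> bool" where
  "semibipartite r m n V1 V2 H \<longleftrightarrow>
     finite V1 \<and> finite V2 \<and> V1 \<inter> V2 = {} \<and> card V1 = m \<and> card V2 = n \<and>
     r_graph r (V1 \<union> V2) H \<and> (\<forall>e\<in>H. card (e \<inter> V1) = 1)"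

text \<open>An ordered copy of the complete r-partite r-graph K^r_{s_1,...,s_r} in H:
  parts W 0, ..., W (r-1) (W 0 plays the role of W_1) with card (W i) = s i,
  pairwise disjoint, W 0 in V1, the others in V2, and every transversal is an edge.\<close>
definition ordered_copy ::
  "nat \<Rightarrow> (nat \<Rightarrow> nat) \<Rightarrow> 'a set \<Rightarrow> 'a set \<Rightarrow> 'a set set \<Rightarrow> (nat \<Rightarrow> 'a set) \<Rightarrow> bool" where
  "ordered_copy r s V1 V2 H W \<longleftrightarrow>
     (\<forall>i<r. finite (W i) \<and> card (W i) = s i) \<and>
     (\<forall>i<r. \<forall>j<r. i \<noteq> j \<longrightarrow> W i \<inter> W j = {}) \<and>
     W 0 \<subseteq> V1 \<and> (\<forall>i. 1 \<le> i \<and> i < r \<longrightarrow> W i \<subseteq> V2) \<and>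
     (\<forall>f. (\<forall>i<r. f i \<in> W i) \<longrightarrow> f ` {..<r} \<in> H)"

definition copy_vertices :: "nat \<Rightarrow> (nat \<Rightarrow> 'a set) \<Rightarrow> 'a set" where
  "copy_vertices r W = (\<Union>i<r. W i)"

definition has_disjoint_ordered_copies ::
  "nat \<Rightarrow> (nat \<Rightarrow> nat) \<Rightarrow> nat \<Rightarrow> 'a set \<Rightarrow> 'a set \<Rightarrow> 'a set set \<Rightarrow> bool" where
  "has_disjoint_ordered_copies r s k V1 V2 H \<longleftrightarrow>
     (\<exists>Ws :: nat \<Rightarrow> nat \<Rightarrow> 'a set.
        (\<forall>j<k. ordered_copy r s V1 V2 H (Ws j)) \<and>
        (\<forall>j<k. \<forall>j'<k. j \<noteq> j' \<longrightarrow> copy_vertices r (Ws j) \<inter> copy_vertices r (Ws j') = {}))"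

end

(*
  Copies of K are chosen greedily. When j < m div s_1 copies have been found, they use
  j*s_1 vertices of V1 and a set U of j*(s - s_1) vertices of V2, and the bound on m gives
  |U| <= beta*n - (s - s_1) with beta = (1 - alpha*s_1)/(r - 1). Take any s_1 unused vertices
  A of V1 and count the distinct (r-1)-lists in V2 - U that form an edge with every vertex of A.
  By the degree bound each vertex of A rules out at most alpha*n^(r-1) lists, which leaves at
  least ((1 - beta)^(r-1) - s_1*alpha)*n^(r-1) - O(n^(r-2)) of them. Since
  s_1*alpha = 1 - (r-1)*beta, the strict Bernoulli inequality makes this a positive proportion
  of all lists when r >= 3, and a supersaturation argument of Erdos (Kovari-Sos-Turan for
  k-partite hypergraphs) yields a box T_1 x ... x T_(r-1) of such lists with |T_i| = s_r.
  Its sides are pairwise disjoint, so together with A it carries an ordered copy of K that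
  avoids all earlier copies. For r = 2 the count directly gives s_2 common neighbours of A.
*)

theory Submission
  imports Defs "HOL-Analysis.Convex" "HOL-Combinatorics.Multiset_Permutations"
begin

lemma power_of_sum_le_sum_of_powers:
  fixes a :: "'b \<Rightarrow> real"
  assumes "\<And>y. y \<in> Y \<Longrightarrow> a y \<ge> 0" "t \<ge> 1"
  shows "(\<Sum>y\<in>Y. a y) ^ t \<le> real (card Y) ^ (t - 1) * (\<Sum>y\<in>Y. a y ^ t)"
proof (cases "finite Y \<and> Y \<noteq> {}")
  case True
  define c where "c = real (card Y)"
  have c: "c > 0" using True by (simp add: c_def card_gt_0_iff)
  have convex: "convex_on {0..} (\<lambda>x::real. x ^ t)"
    by (cases "even t") (auto intro: convex_on_subset convex_power_even convex_power_odd)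
  have "(\<Sum>y\<in>Y. a y / c) ^ t \<le> (\<Sum>y\<in>Y. a y ^ t / c)"
    using convex_on_sum[OF _ _ convex, where a = "\<lambda>_. 1 / c" and S = Y and y = a] True assms(1)
    by (simp add: c_def)
  then have "(\<Sum>y\<in>Y. a y) ^ t / c ^ t \<le> (\<Sum>y\<in>Y. a y ^ t) / c"
    by (simp add: power_divide flip: sum_divide_distrib)
  moreover have "c ^ t = c * c ^ (t - 1)" using assms(2) by (cases t) auto
  ultimately show ?thesis using c by (simp add: divide_simps c_def mult.commute)
next
  case False
  then show ?thesis using assms(2) by (auto simp: power_0_left)
qed

lemma strict_Bernoulli_inequality:
  fixes x :: real
  assumes "-1 < x" "x \<noteq> 0" "n \<ge> 2"
  shows "1 + real n * x < (1 + x) ^ n"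
  using assms(3)
proof (induction n rule: dec_induct)
  case base
  have "0 < x\<^sup>2" using assms(2) by simp
  then show ?case by (simp add: power2_sum)
next
  case (step n)
  have "0 \<le> real n * (x * x)" by simp
  then have "1 + real (Suc n) * x \<le> (1 + real n * x) * (1 + x)"
    by (simp add: algebra_simps)
  also have "\<dots> < (1 + x) ^ n * (1 + x)"
    using step.IH assms(1) by (intro mult_strict_right_mono) auto
  finally show ?case by (simp add: mult.commute)
qed

lemma card_distinct_lists_ge:
  assumes "finite V"
  shows "real (card V) ^ t - real t ^ 2 * real (card V) ^ (t - 1)
           \<le> real (card {xs. length xs = t \<and> distinct xs \<and> set xs \<subseteq> V})"
proof (cases "t = 0")
  case True
  then have "{xs. length xs = t \<and> distinct xs \<and> set xs \<subseteq> V} = {[]}" by auto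
  then show ?thesis using True by simp
next
  case False
  define n where "n = card V"
  have pow_t: "real n ^ t = real n * real n ^ (t - 1)"
    using False by (cases t) auto
  show ?thesis
  proof (cases "t \<le> n")
    case True
    have n: "n > 0" using True False by simp
    have "real n ^ t - real t ^ 2 * real n ^ (t - 1) = real n ^ t * (1 + real t * (- (real t / n)))"
      using n pow_t by (simp add: field_simps power2_eq_square)
    also have "\<dots> \<le> real n ^ t * (1 + (- (real t / n))) ^ t"
      using True n by (intro mult_left_mono Bernoulli_inequality) auto
    also have "\<dots> = real (n - t) ^ t"
      using True n by (simp add: of_nat_diff field_simps flip: power_mult_distrib)
    also have "\<dots> = real (\<Prod>i\<in>{n - t + 1..n}. n - t)"
      using True by simp
    also have "\<dots> \<le> real (\<Prod>{n - t + 1..n})"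
      by (intro of_nat_mono prod_mono) auto
    also have "\<dots> = real (card {xs. length xs = t \<and> distinct xs \<and> set xs \<subseteq> V})"
      using card_lists_distinct_length_eq[OF assms] True by (simp add: n_def)
    finally show ?thesis by (simp add: n_def)
  next
    case False
    then have "n \<le> t * t" by (meson le_square le_trans nat_le_linear)
    then have "real n \<le> real t ^ 2" by (simp add: power2_eq_square flip: of_nat_mult)
    then have "real n ^ t - real t ^ 2 * real n ^ (t - 1) \<le> 0"
      by (simp add: pow_t mult_right_mono)
    then show ?thesis by (simp add: n_def)
  qed
qed

lemma card_nondistinct_lists_le:
  assumes "finite V"
  shows "real (card {zs. set zs \<subseteq> V \<and> length zs = t \<and> \<not> distinct zs})
           \<le> real t ^ 2 * real (card V) ^ (t - 1)"
proof -
  let ?L = "{zs. set zs \<subseteq> V \<and> length zs = t}"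
  let ?D = "{zs. length zs = t \<and> distinct zs \<and> set zs \<subseteq> V}"
  have "?D \<subseteq> ?L" by auto
  moreover have "finite ?L" using assms by (rule finite_lists_length_eq)
  moreover have "{zs. set zs \<subseteq> V \<and> length zs = t \<and> \<not> distinct zs} = ?L - ?D" by auto
  ultimately have "card {zs. set zs \<subseteq> V \<and> length zs = t \<and> \<not> distinct zs} = card V ^ t - card ?D"
    using assms by (simp add: card_Diff_subset finite_subset card_lists_length_eq)
  moreover have "card ?D \<le> card V ^ t"
    using card_mono[OF \<open>finite ?L\<close> \<open>?D \<subseteq> ?L\<close>] assms by (simp add: card_lists_length_eq)
  ultimately show ?thesis
    using card_distinct_lists_ge[OF assms, of t] by (simp add: of_nat_diff)
qed

lemma card_distinct_lists_eq_fact_mult_card_subsets: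
  assumes "finite V"
  shows "card {xs. length xs = k \<and> distinct xs \<and> set xs \<subseteq> V \<and> P (set xs)}
           = fact k * card {e. e \<subseteq> V \<and> card e = k \<and> P e}"
proof -
  let ?I = "{e. e \<subseteq> V \<and> card e = k \<and> P e}"
  have finI: "finite ?I" by (rule finite_subset[of _ "Pow V"]) (auto simp: assms)
  have "{xs. length xs = k \<and> distinct xs \<and> set xs \<subseteq> V \<and> P (set xs)} = (\<Union>e\<in>?I. permutations_of_set e)"
    by (auto simp: permutations_of_set_def distinct_card)
  moreover have "card (\<Union>e\<in>?I. permutations_of_set e) = (\<Sum>e\<in>?I. card (permutations_of_set e))"
    by (rule card_UN_disjoint[OF finI]) (simp, auto simp: permutations_of_set_def)
  moreover have "card (permutations_of_set e) = fact k" if "e \<in> ?I" for e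
    using that by (simp add: finite_subset[OF _ assms])
  ultimately show ?thesis by simp
qed

lemma sum_card_power_eq_sum_card_containing:
  fixes N :: "'b \<Rightarrow> 'a set"
  assumes "finite V" "finite Y" "\<And>y. y \<in> Y \<Longrightarrow> N y \<subseteq> V"
  shows "(\<Sum>y\<in>Y. card (N y) ^ t)
           = (\<Sum>zs\<in>{zs. set zs \<subseteq> V \<and> length zs = t}. card {y\<in>Y. set zs \<subseteq> N y})"
proof -
  let ?L = "{zs. set zs \<subseteq> V \<and> length zs = t}"
  have finL: "finite ?L" using assms(1) by (rule finite_lists_length_eq)
  have "card (N y) ^ t = (\<Sum>zs\<in>?L. of_bool (set zs \<subseteq> N y))" if "y \<in> Y" for y
  proof -
    have "?L \<inter> {zs. set zs \<subseteq> N y} = {zs. set zs \<subseteq> N y \<and> length zs = t}"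
      using assms(3)[OF that] by auto
    then show ?thesis
      using finL card_lists_length_eq[OF finite_subset[OF assms(3)[OF that] assms(1)]] by simp
  qed
  then have "(\<Sum>y\<in>Y. card (N y) ^ t) = (\<Sum>y\<in>Y. \<Sum>zs\<in>?L. of_bool (set zs \<subseteq> N y))"
    by (rule sum.cong[OF refl])
  also have "\<dots> = (\<Sum>zs\<in>?L. \<Sum>y\<in>Y. of_bool (set zs \<subseteq> N y))"
    by (rule sum.swap)
  also have "\<dots> = (\<Sum>zs\<in>?L. card {y\<in>Y. set zs \<subseteq> N y})"
    using assms(2) by (simp add: Int_def)
  finally show ?thesis .
qed

lemma exists_ge_of_sum_gt:
  fixes f :: "'b \<Rightarrow> real"
  assumes "finite L" "D \<subseteq> L" "\<And>x. x \<in> L - D \<Longrightarrow> f x \<le> B"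
    and "real (card D) * c + real (card (L - D)) * B < (\<Sum>x\<in>L. f x)"
  shows "\<exists>x\<in>D. c \<le> f x"
proof (rule ccontr)
  assume "\<not> (\<exists>x\<in>D. c \<le> f x)"
  then have "(\<Sum>x\<in>D. f x) \<le> (\<Sum>x\<in>D. c)"
    by (intro sum_mono) (auto simp: not_le less_imp_le)
  moreover have "(\<Sum>x\<in>L - D. f x) \<le> (\<Sum>x\<in>L - D. B)"
    by (intro sum_mono assms(3))
  moreover have "(\<Sum>x\<in>L. f x) = (\<Sum>x\<in>L - D. f x) + (\<Sum>x\<in>D. f x)"
    using assms(2,1) by (rule sum.subset_diff)
  ultimately show False using assms(4) by (simp add: mult.commute)
qed

section \<open>Boxes of lists\<close>

definition box_lists :: "nat \<Rightarrow> (nat \<Rightarrow> 'a set) \<Rightarrow> 'a list set" where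
  "box_lists k T = {xs. length xs = k \<and> (\<forall>i<k. xs ! i \<in> T i)}"

lemma box_lists_0 [simp]: "box_lists 0 T = {[]}"
  by (auto simp: box_lists_def)

lemma Cons_in_box_lists_Suc_iff:
  "x # ys \<in> box_lists (Suc k) T \<longleftrightarrow> x \<in> T 0 \<and> ys \<in> box_lists k (\<lambda>i. T (Suc i))"
  by (auto simp: box_lists_def All_less_Suc2)

lemma box_lists_Suc_0: "box_lists (Suc 0) T = (\<lambda>x. [x]) ` T 0"
  by (auto simp: box_lists_def length_Suc_conv)

lemma map_in_box_lists: "(\<And>i. i < k \<Longrightarrow> f i \<in> T i) \<Longrightarrow> map f [0..<k] \<in> box_lists k T"
  by (simp add: box_lists_def)

lemma box_lists_subset_imp_subset:
  assumes "\<And>i. i < k \<Longrightarrow> T i \<noteq> {}" "box_lists k T \<subseteq> {xs. set xs \<subseteq> X}" "i < k"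
  shows "T i \<subseteq> X"
proof
  fix x assume "x \<in> T i"
  define f where "f l = (if l = i then x else SOME y. y \<in> T l)" for l
  have "map f [0..<k] \<in> box_lists k T"
    using assms(1) \<open>x \<in> T i\<close> by (intro map_in_box_lists) (auto simp: f_def some_in_eq)
  with assms(2,3) show "x \<in> X" by (force simp: f_def)
qed

lemma box_lists_subset_distinct_imp_disjoint:
  assumes "\<And>i. i < k \<Longrightarrow> T i \<noteq> {}" "box_lists k T \<subseteq> {xs. distinct xs}"
    and "i < k" "j < k" "i \<noteq> j"
  shows "T i \<inter> T j = {}"
proof (rule ccontr)
  assume "T i \<inter> T j \<noteq> {}"
  then obtain x where "x \<in> T i" "x \<in> T j" by blast
  define f where "f l = (if l = i \<or> l = j then x else SOME y. y \<in> T l)" for l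
  have "map f [0..<k] \<in> box_lists k T"
    using assms(1) \<open>x \<in> T i\<close> \<open>x \<in> T j\<close> by (intro map_in_box_lists) (auto simp: f_def some_in_eq)
  with assms(2) have "distinct (map f [0..<k])" by blast
  moreover have "map f [0..<k] ! i = map f [0..<k] ! j" using assms(3,4) by (simp add: f_def)
  ultimately show False using assms(3-5) by (auto simp: distinct_conv_nth)
qed

section \<open>Dense sets of lists contain boxes\<close>

definition common_tails :: "'a list set \<Rightarrow> 'a set \<Rightarrow> nat \<Rightarrow> 'a set \<Rightarrow> 'a list set" where
  "common_tails E V k X = {ys. set ys \<subseteq> V \<and> length ys = k \<and> (\<forall>x\<in>X. x # ys \<in> E)}"

lemma card_eq_sum_card_heads:
  assumes "finite V" "E \<subseteq> {xs. set xs \<subseteq> V \<and> length xs = Suc k}"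
  shows "card E = (\<Sum>ys\<in>{ys. set ys \<subseteq> V \<and> length ys = k}. card {x\<in>V. x # ys \<in> E})"
proof -
  let ?Y = "{ys. set ys \<subseteq> V \<and> length ys = k}"
  let ?S = "SIGMA ys:?Y. {x\<in>V. x # ys \<in> E}"
  have E_eq: "E = (\<lambda>(ys, x). x # ys) ` ?S"
  proof (intro equalityI subsetI)
    fix xs assume "xs \<in> E"
    with assms(2) have "set xs \<subseteq> V" "length xs = Suc k" by auto
    then obtain x ys where "xs = x # ys" "x \<in> V" "set ys \<subseteq> V" "length ys = k"
      by (cases xs) auto
    with \<open>xs \<in> E\<close> show "xs \<in> (\<lambda>(ys, x). x # ys) ` ?S"
      by (intro rev_image_eqI[of "(ys, x)"]) auto
  qed auto
  have "inj_on (\<lambda>(ys, x). x # ys) ?S"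
    by (auto simp: inj_on_def)
  from card_image[OF this, folded E_eq] have "card E = card ?S" .
  also have "\<dots> = (\<Sum>ys\<in>?Y. card {x\<in>V. x # ys \<in> E})"
    using assms(1) by (intro card_SigmaI) (auto simp: finite_lists_length_eq)
  finally show ?thesis .
qed

lemma sum_card_common_tails_ge:
  fixes c :: real
  assumes "finite V" "E \<subseteq> {xs. set xs \<subseteq> V \<and> length xs = Suc k}"
    and "c * real (card V) ^ Suc k \<le> real (card E)" "c \<ge> 0" "t \<ge> 1"
  shows "c ^ t * real (card V) ^ (k + t)
           \<le> (\<Sum>zs\<in>{zs. set zs \<subseteq> V \<and> length zs = t}. real (card (common_tails E V k (set zs))))"
    (is "_ \<le> ?S")
proof (cases "card V = 0")
  case True
  then show ?thesis using assms(5) by (simp add: sum_nonneg power_0_left)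
next
  case False
  define n where "n = card V"
  define Y where "Y = {ys. set ys \<subseteq> V \<and> length ys = k}"
  define Nb where "Nb ys = {x\<in>V. x # ys \<in> E}" for ys
  have n: "real n > 0" using False by (simp add: n_def)
  have cardY: "card Y = n ^ k"
    using assms(1) by (simp add: Y_def n_def card_lists_length_eq)
  have "(c * real n ^ Suc k) ^ t \<le> (\<Sum>ys\<in>Y. real (card (Nb ys))) ^ t"
    using assms(3,4) card_eq_sum_card_heads[OF assms(1,2)]
    by (intro power_mono) (simp_all add: n_def Y_def Nb_def)
  also have "\<dots> \<le> real (card Y) ^ (t - 1) * (\<Sum>ys\<in>Y. real (card (Nb ys)) ^ t)"
    using assms(5) by (intro power_of_sum_le_sum_of_powers) auto
  also have "(\<Sum>ys\<in>Y. real (card (Nb ys)) ^ t) = ?S"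
  proof -
    have "(\<Sum>ys\<in>Y. card (Nb ys) ^ t)
            = (\<Sum>zs\<in>{zs. set zs \<subseteq> V \<and> length zs = t}. card {ys\<in>Y. set zs \<subseteq> Nb ys})"
      using assms(1) by (intro sum_card_power_eq_sum_card_containing)
        (auto simp: Y_def Nb_def finite_lists_length_eq)
    moreover have "{ys\<in>Y. set zs \<subseteq> Nb ys} = common_tails E V k (set zs)" if "set zs \<subseteq> V" for zs
      using that by (auto simp: Y_def Nb_def common_tails_def)
    ultimately show ?thesis
      by (simp flip: of_nat_power of_nat_sum)
  qed
  finally have "(c * real n ^ Suc k) ^ t \<le> real n ^ (k * (t - 1)) * ?S"
    by (simp add: cardY power_mult)
  moreover have "(c * real n ^ Suc k) ^ t = real n ^ (k * (t - 1)) * (c ^ t * real n ^ (k + t))"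
  proof -
    have "Suc k * t = k * (t - 1) + (k + t)" using assms(5) by (cases t) auto
    then have "real n ^ (Suc k * t) = real n ^ (k * (t - 1)) * real n ^ (k + t)"
      by (simp only: power_add)
    moreover have "(c * real n ^ Suc k) ^ t = c ^ t * real n ^ (Suc k * t)"
      by (simp only: power_mult_distrib power_mult)
    ultimately show ?thesis by simp
  qed
  ultimately show ?thesis using n by (simp add: n_def)
qed

lemma exists_distinct_list_many_common_tails:
  fixes c :: real
  assumes "finite V" "E \<subseteq> {xs. set xs \<subseteq> V \<and> length xs = Suc k}"
    and "c * real (card V) ^ Suc k \<le> real (card E)" "c \<ge> 0" "t \<ge> 1"
    and "2 * real t ^ 2 < c ^ t * real (card V)"
  shows "\<exists>zs. length zs = t \<and> distinct zs \<and> set zs \<subseteq> V \<and>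
           c ^ t / 2 * real (card V) ^ k \<le> real (card (common_tails E V k (set zs)))"
proof -
  define n where "n = card V"
  define L where "L = {zs. set zs \<subseteq> V \<and> length zs = t}"
  define DL where "DL = {zs\<in>L. distinct zs}"
  define f where "f zs = real (card (common_tails E V k (set zs)))" for zs
  have n: "real n > 0"
    using assms(6) by (cases "n = 0") (auto simp: n_def intro: order.strict_trans1[of 0])
  have finL: "finite L" and card_L: "card L = n ^ t"
    using assms(1) by (simp_all add: L_def n_def finite_lists_length_eq card_lists_length_eq)
  have DL_sub: "DL \<subseteq> L" by (auto simp: DL_def)
  have card_DL: "card DL \<le> n ^ t"
    using card_mono[OF finL DL_sub] card_L by simp
  have "L - DL = {zs. set zs \<subseteq> V \<and> length zs = t \<and> \<not> distinct zs}"
    by (auto simp: L_def DL_def)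
  then have card_nondistinct: "real (card (L - DL)) \<le> real t ^ 2 * real n ^ (t - 1)"
    using card_nondistinct_lists_le[OF assms(1), of t] by (simp add: n_def)
  have f_le: "f zs \<le> real n ^ k" for zs
  proof -
    have "common_tails E V k (set zs) \<subseteq> {ys. set ys \<subseteq> V \<and> length ys = k}"
      by (auto simp: common_tails_def)
    from card_mono[OF finite_lists_length_eq[OF assms(1)] this] show ?thesis
      by (simp add: f_def n_def card_lists_length_eq[OF assms(1)] flip: of_nat_power)
  qed
  have pow_t: "real n ^ t = real n * real n ^ (t - 1)"
    using assms(5) by (cases t) auto
  have "real (card DL) * (c ^ t / 2 * real n ^ k) + real (card (L - DL)) * real n ^ k
          \<le> real n ^ t * (c ^ t / 2 * real n ^ k) + real t ^ 2 * real n ^ (t - 1) * real n ^ k"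
    using card_DL card_nondistinct assms(4)
    by (intro add_mono mult_right_mono) (auto simp flip: of_nat_power)
  also have "\<dots> = real n ^ (t - 1) * real n ^ k * (c ^ t / 2 * real n + real t ^ 2)"
    by (simp add: pow_t algebra_simps)
  also have "\<dots> < real n ^ (t - 1) * real n ^ k * (c ^ t * real n)"
    using n assms(6) by (intro mult_strict_left_mono) (auto simp: n_def)
  also have "\<dots> = c ^ t * real n ^ (k + t)"
    by (simp add: pow_t power_add algebra_simps)
  also have "\<dots> \<le> (\<Sum>zs\<in>L. f zs)"
    unfolding f_def L_def n_def by (rule sum_card_common_tails_ge[OF assms(1-5)])
  finally obtain zs where "zs \<in> DL" "c ^ t / 2 * real n ^ k \<le> f zs"
    using exists_ge_of_sum_gt[OF finL DL_sub, of f "real n ^ k"] f_le by blast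
  then show ?thesis by (auto simp: DL_def L_def f_def n_def)
qed

lemma box_lists_Suc_subset_of_common_tails:
  assumes "box_lists k T \<subseteq> common_tails E V k X"
  shows "box_lists (Suc k) (case_nat X T) \<subseteq> E"
proof
  fix xs assume xs: "xs \<in> box_lists (Suc k) (case_nat X T)"
  then obtain x ys where "xs = x # ys"
    by (cases xs) (auto simp: box_lists_def)
  with xs have "x \<in> X" "ys \<in> box_lists k T"
    by (simp_all add: Cons_in_box_lists_Suc_iff)
  with assms \<open>xs = x # ys\<close> show "xs \<in> E"
    by (auto simp: common_tails_def)
qed

text \<open>Induction on the length k: by convexity some t distinct heads have \<open>c^t/2 n^k\<close> common
  tails, and the induction hypothesis finds a box among those tails.\<close>
lemma dense_lists_contain_box:
  fixes c :: real
  assumes "c > 0" "t \<ge> 1"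
  shows "\<exists>N. \<forall>(V::'a set) E. finite V \<longrightarrow> N \<le> card V \<longrightarrow>
           E \<subseteq> {xs. set xs \<subseteq> V \<and> length xs = k} \<longrightarrow> c * real (card V) ^ k \<le> real (card E) \<longrightarrow>
           (\<exists>T. (\<forall>i<k. T i \<subseteq> V \<and> card (T i) = t) \<and> box_lists k T \<subseteq> E)"
  using assms(1)
proof (induction k arbitrary: c)
  case 0
  have "[] \<in> E" if "E \<subseteq> {xs. set xs \<subseteq> V \<and> length xs = 0}" "c \<le> real (card E)"
    for V and E :: "'a list set"
    using that 0 by (cases "E = {}") auto
  then show ?case by (intro exI[of _ 0] allI impI) auto
next
  case (Suc k)
  define c' where "c' = c ^ t / 2"
  have "c' > 0" using Suc.prems by (simp add: c'_def)
  from Suc.IH[OF this] obtain N' where N': "\<forall>(V::'a set) E. finite V \<longrightarrow> N' \<le> card V \<longrightarrow>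
      E \<subseteq> {xs. set xs \<subseteq> V \<and> length xs = k} \<longrightarrow> c' * real (card V) ^ k \<le> real (card E) \<longrightarrow>
      (\<exists>T. (\<forall>i<k. T i \<subseteq> V \<and> card (T i) = t) \<and> box_lists k T \<subseteq> E)"
    by (elim exE)
  define N where "N = max N' (nat \<lceil>2 * real t ^ 2 / c ^ t\<rceil> + 1)"
  show ?case
  proof (intro exI[of _ N] allI impI)
    fix V :: "'a set" and E
    assume V: "finite V" "N \<le> card V"
      and E: "E \<subseteq> {xs. set xs \<subseteq> V \<and> length xs = Suc k}" "c * real (card V) ^ Suc k \<le> real (card E)"
    have "2 * real t ^ 2 / c ^ t < real (card V)"
      using V(2) by (simp add: N_def) linarith
    then have "2 * real t ^ 2 < c ^ t * real (card V)"
      using Suc.prems by (simp add: field_simps)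
    then obtain zs where zs: "length zs = t" "distinct zs" "set zs \<subseteq> V"
        "c' * real (card V) ^ k \<le> real (card (common_tails E V k (set zs)))"
      using exists_distinct_list_many_common_tails[OF V(1) E less_imp_le[OF Suc.prems] assms(2)]
      unfolding c'_def by blast
    have "N' \<le> card V" using V(2) by (simp add: N_def)
    moreover have "common_tails E V k (set zs) \<subseteq> {xs. set xs \<subseteq> V \<and> length xs = k}"
      by (auto simp: common_tails_def)
    ultimately obtain T' where T': "\<forall>i<k. T' i \<subseteq> V \<and> card (T' i) = t"
        "box_lists k T' \<subseteq> common_tails E V k (set zs)"
      using N' V(1) zs(4) by blast
    have "\<forall>i<Suc k. case_nat (set zs) T' i \<subseteq> V \<and> card (case_nat (set zs) T' i) = t"
      using T'(1) zs by (simp add: All_less_Suc2 distinct_card)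
    moreover have "box_lists (Suc k) (case_nat (set zs) T') \<subseteq> E"
      using T'(2) by (rule box_lists_Suc_subset_of_common_tails)
    ultimately show "\<exists>T. (\<forall>i<Suc k. T i \<subseteq> V \<and> card (T i) = t) \<and> box_lists (Suc k) T \<subseteq> E"
      by blast
  qed
qed

section \<open>Common links in semibipartite hypergraphs\<close>

text \<open>The common link of A is taken as ordered lists rather than (r-1)-sets, so that a box of
  such lists is a complete (r-1)-partite graph in it; its sides are disjoint because the lists
  are distinct.\<close>
definition common_link_lists :: "nat \<Rightarrow> 'a set \<Rightarrow> 'a set set \<Rightarrow> 'a set \<Rightarrow> 'a set \<Rightarrow> 'a list set" where
  "common_link_lists k V2 H A U =
     {xs. length xs = k \<and> distinct xs \<and> set xs \<subseteq> V2 - U \<and> (\<forall>v\<in>A. insert v (set xs) \<in> H)}"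

lemma semibipartite_edge_Diff_V1_vertex:
  assumes "semibipartite r m n V1 V2 H" "e \<in> H" "v \<in> e" "v \<in> V1"
  shows "e - {v} \<subseteq> V2" "card (e - {v}) = r - 1"
proof -
  have fin: "finite (V1 \<union> V2)" and e: "e \<subseteq> V1 \<union> V2" "card e = r" "card (e \<inter> V1) = 1"
    using assms(1,2) unfolding semibipartite_def r_graph_def by auto
  obtain x where "e \<inter> V1 = {x}"
    using e(3) by (auto simp: card_1_singleton_iff)
  moreover have "v \<in> e \<inter> V1" using assms(3,4) by blast
  ultimately have "e \<inter> V1 = {v}" by simp
  with e(1) show "e - {v} \<subseteq> V2" by blast
  have "finite e" using e(1) fin by (rule finite_subset)
  with e(2) assms(3) show "card (e - {v}) = r - 1" by (simp add: card_Diff_singleton)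
qed

lemma card_link_eq_degree:
  assumes "semibipartite r m n V1 V2 H" "v \<in> V1"
  shows "card {e. e \<subseteq> V2 \<and> card e = r - 1 \<and> insert v e \<in> H} = degree H v"
proof -
  let ?L = "{e. e \<subseteq> V2 \<and> card e = r - 1 \<and> insert v e \<in> H}"
  have v_notin: "v \<notin> e" if "e \<subseteq> V2" for e
    using that assms unfolding semibipartite_def by blast
  have "{e\<in>H. v \<in> e} \<subseteq> insert v ` ?L"
  proof
    fix e assume "e \<in> {e\<in>H. v \<in> e}"
    then have "e \<in> H" "v \<in> e" by simp_all
    moreover have "insert v (e - {v}) = e" using \<open>v \<in> e\<close> by blast
    ultimately show "e \<in> insert v ` ?L"
      using semibipartite_edge_Diff_V1_vertex[OF assms(1) _ _ assms(2)]
      by (intro image_eqI[of e "insert v" "e - {v}"]) simp_all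
  qed
  then have "{e\<in>H. v \<in> e} = insert v ` ?L" by blast
  moreover have "inj_on (insert v) ?L"
  proof (rule inj_onI)
    fix e e' assume "e \<in> ?L" "e' \<in> ?L" "insert v e = insert v e'"
    with v_notin show "e = e'" by (simp add: insert_ident)
  qed
  ultimately show ?thesis by (simp add: degree_def card_image)
qed

lemma card_non_link_lists_le:
  fixes \<alpha> :: real
  assumes "semibipartite r m n V1 V2 H" "v \<in> V1" "\<alpha> \<ge> 0"
    and "(1 - \<alpha>) * real (n choose (r - 1)) \<le> real (degree H v)"
  shows "real (card {xs. length xs = r - 1 \<and> distinct xs \<and> set xs \<subseteq> V2 \<and> insert v (set xs) \<notin> H})
           \<le> \<alpha> * real n ^ (r - 1)"
proof -
  define k where "k = r - 1"
  have finV2: "finite V2" and card_V2: "card V2 = n"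
    using assms(1) by (auto simp: semibipartite_def)
  let ?K = "{e. e \<subseteq> V2 \<and> card e = k}"
  let ?L = "{e. e \<subseteq> V2 \<and> card e = k \<and> insert v e \<in> H}"
  have finK: "finite ?K" by (rule finite_subset[of _ "Pow V2"]) (auto simp: finV2)
  have card_K: "card ?K = n choose k" using n_subsets[OF finV2] card_V2 by simp
  have card_L: "card ?L = degree H v"
    using card_link_eq_degree[OF assms(1,2)] by (simp add: k_def)
  have finL: "finite ?L" by (rule finite_subset[OF _ finK]) auto
  have L_le_K: "card ?L \<le> card ?K" using finK by (intro card_mono) auto
  have "card {xs. length xs = k \<and> distinct xs \<and> set xs \<subseteq> V2 \<and> insert v (set xs) \<notin> H}
          = fact k * card (?K - ?L)"
  proof -
    have "{e. e \<subseteq> V2 \<and> card e = k \<and> insert v e \<notin> H} = ?K - ?L" by auto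
    then show ?thesis
      using card_distinct_lists_eq_fact_mult_card_subsets[OF finV2, of k "\<lambda>e. insert v e \<notin> H"]
      by simp
  qed
  also have "card (?K - ?L) = (n choose k) - degree H v"
    using finL card_K card_L by (subst card_Diff_subset) auto
  finally have "real (card {xs. length xs = k \<and> distinct xs \<and> set xs \<subseteq> V2 \<and> insert v (set xs) \<notin> H})
                  = fact k * (real (n choose k) - real (degree H v))"
    using L_le_K card_K card_L by (simp add: of_nat_diff)
  also have "\<dots> \<le> fact k * (\<alpha> * real (n choose k))"
    using assms(4) by (intro mult_left_mono) (auto simp: k_def algebra_simps)
  also have "\<dots> = \<alpha> * (real (n choose k) * fact k)" by simp
  also have "\<dots> \<le> \<alpha> * real n ^ k"
  proof -
    have "real ((n choose k) * fact k) \<le> real (n ^ k)"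
      using binomial_fact_pow by (rule of_nat_mono)
    then show ?thesis
      using assms(3) by (intro mult_left_mono) (simp_all only: of_nat_mult of_nat_power of_nat_fact)
  qed
  finally show ?thesis by (simp add: k_def)
qed

lemma card_common_link_lists_ge:
  fixes \<alpha> :: real
  assumes "semibipartite r m n V1 V2 H" "\<alpha> \<ge> 0" "A \<subseteq> V1" "finite A"
    and "\<forall>v\<in>A. (1 - \<alpha>) * real (n choose (r - 1)) \<le> real (degree H v)"
  shows "real (card {xs. length xs = r - 1 \<and> distinct xs \<and> set xs \<subseteq> V2 - U})
           - real (card A) * (\<alpha> * real n ^ (r - 1))
         \<le> real (card (common_link_lists (r - 1) V2 H A U))"
proof -
  define k where "k = r - 1"
  define D where "D = {xs. length xs = k \<and> distinct xs \<and> set xs \<subseteq> V2 - U}"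
  define CL where "CL = common_link_lists k V2 H A U"
  define Bad where "Bad v = {xs. length xs = k \<and> distinct xs \<and> set xs \<subseteq> V2 \<and> insert v (set xs) \<notin> H}"
    for v
  have finV2: "finite V2" using assms(1) by (simp add: semibipartite_def)
  have fin: "finite X" if "X \<subseteq> {xs. set xs \<subseteq> V2 \<and> length xs = k}" for X
    using that finite_lists_length_eq[OF finV2] by (rule finite_subset)
  have "D \<subseteq> CL \<union> (\<Union>v\<in>A. Bad v)"
    by (auto simp: D_def CL_def Bad_def common_link_lists_def)
  then have "card D \<le> card (CL \<union> (\<Union>v\<in>A. Bad v))"
    using assms(4) by (intro card_mono finite_UnI finite_UN_I fin)
      (auto simp: CL_def Bad_def common_link_lists_def)
  also have "\<dots> \<le> card CL + card (\<Union>v\<in>A. Bad v)"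
    by (rule card_Un_le)
  also have "\<dots> \<le> card CL + (\<Sum>v\<in>A. card (Bad v))"
    using card_UN_le[OF assms(4)] by simp
  finally have "real (card D) \<le> real (card CL) + (\<Sum>v\<in>A. real (card (Bad v)))"
    by (simp flip: of_nat_sum of_nat_add)
  moreover have "(\<Sum>v\<in>A. real (card (Bad v))) \<le> (\<Sum>v\<in>A. \<alpha> * real n ^ k)"
    using assms card_non_link_lists_le[OF assms(1) _ assms(2)]
    by (intro sum_mono) (auto simp: Bad_def k_def)
  ultimately show ?thesis by (simp add: D_def CL_def k_def)
qed

lemma common_link_lists_Suc_0:
  "common_link_lists (Suc 0) V2 H A U = (\<lambda>x. [x]) ` {x \<in> V2 - U. \<forall>v\<in>A. {v, x} \<in> H}"
  by (auto simp: common_link_lists_def length_Suc_conv)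

definition common_link_boxes ::
    "nat \<Rightarrow> nat \<Rightarrow> nat \<Rightarrow> real \<Rightarrow> 'a set \<Rightarrow> 'a set \<Rightarrow> 'a set set \<Rightarrow> bool" where
  "common_link_boxes r a t b V1 V2 H \<longleftrightarrow>
     (\<forall>A U. A \<subseteq> V1 \<longrightarrow> card A = a \<longrightarrow> U \<subseteq> V2 \<longrightarrow> real (card U) \<le> b \<longrightarrow>
        (\<exists>T. (\<forall>i<r - 1. card (T i) = t) \<and> box_lists (r - 1) T \<subseteq> common_link_lists (r - 1) V2 H A U))"

lemma common_link_boxes_mono:
  assumes "b' \<le> b" "common_link_boxes r a t b V1 V2 H"
  shows "common_link_boxes r a t b' V1 V2 H"
proof -
  have "real (card U) \<le> b" if "real (card U) \<le> b'" for U :: "'a set" using that assms(1) by linarith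
  with assms(2) show ?thesis unfolding common_link_boxes_def by blast
qed

lemma common_link_boxes_rank_2:
  fixes \<alpha> :: real
  assumes "semibipartite 2 m n V1 V2 H" "\<alpha> \<ge> 0"
    and "\<forall>v\<in>V1. (1 - \<alpha>) * real n \<le> real (degree H v)"
  shows "common_link_boxes 2 a t ((1 - \<alpha> * real a) * real n - real t) V1 V2 H"
  unfolding common_link_boxes_def
proof (intro allI impI)
  fix A U
  assume A: "A \<subseteq> V1" "card A = a" and U: "U \<subseteq> V2" "real (card U) \<le> (1 - \<alpha> * real a) * real n - real t"
  let ?X = "{x \<in> V2 - U. \<forall>v\<in>A. {v, x} \<in> H}"
  have finV2: "finite V2" and card_V2: "card V2 = n" and "finite A"
    using assms(1) A(1) by (auto simp: semibipartite_def intro: finite_subset)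
  have "{xs. length xs = 1 \<and> distinct xs \<and> set xs \<subseteq> V2 - U} = (\<lambda>x. [x]) ` (V2 - U)"
    by (auto simp: length_Suc_conv)
  then have "card {xs. length xs = 1 \<and> distinct xs \<and> set xs \<subseteq> V2 - U} = n - card U"
    using finV2 U(1) card_V2 by (simp add: card_image inj_on_def card_Diff_subset finite_subset)
  moreover have "card (common_link_lists 1 V2 H A U) = card ?X"
    by (simp add: common_link_lists_Suc_0 card_image inj_on_def)
  moreover have "\<forall>v\<in>A. (1 - \<alpha>) * real (n choose (2 - 1)) \<le> real (degree H v)"
    using assms(3) A(1) by auto
  ultimately have "real (n - card U) - real a * (\<alpha> * real n) \<le> real (card ?X)"
    using card_common_link_lists_ge[OF assms(1,2) A(1) \<open>finite A\<close>, of U] A(2) by simp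
  moreover have "card U \<le> n"
    using card_mono[OF finV2 U(1)] card_V2 by simp
  ultimately have "t \<le> card ?X"
    using U(2) by (simp add: of_nat_diff algebra_simps)
  then obtain X where "X \<subseteq> ?X" "card X = t"
    by (meson obtain_subset_with_card_n)
  then show "\<exists>T. (\<forall>i<2 - 1. card (T i) = t) \<and> box_lists (2 - 1) T \<subseteq> common_link_lists (2 - 1) V2 H A U"
    by (intro exI[of _ "\<lambda>_. X"]) (auto simp: box_lists_Suc_0 common_link_lists_Suc_0)
qed

lemma card_common_link_lists_ge_density:
  fixes \<alpha> \<beta> :: real
  assumes "semibipartite r m n V1 V2 H" "r \<ge> 2" "\<alpha> \<ge> 0" "A \<subseteq> V1" "finite A"
    and "\<forall>v\<in>A. (1 - \<alpha>) * real (n choose (r - 1)) \<le> real (degree H v)"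
    and "U \<subseteq> V2" "\<beta> \<le> 1" "real (card U) \<le> \<beta> * real n"
    and "2 * real (r - 1) ^ 2 \<le> ((1 - \<beta>) ^ (r - 1) - real (card A) * \<alpha>) * real n"
  shows "((1 - \<beta>) ^ (r - 1) - real (card A) * \<alpha>) / 2 * real n ^ (r - 1)
           \<le> real (card (common_link_lists (r - 1) V2 H A U))"
proof -
  define k where "k = r - 1"
  define \<gamma> where "\<gamma> = (1 - \<beta>) ^ k - real (card A) * \<alpha>"
  define N where "N = card (V2 - U)"
  have finV2: "finite V2" and card_V2: "card V2 = n"
    using assms(1) by (auto simp: semibipartite_def)
  have "real N = real n - real (card U)"
    using card_Diff_subset[OF finite_subset[OF assms(7) finV2] assms(7)] card_mono[OF finV2 assms(7)]
    by (simp add: N_def card_V2 of_nat_diff)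
  then have N_ge: "(1 - \<beta>) * real n \<le> real N" and N_le: "real N \<le> real n"
    using assms(9) by (simp_all add: algebra_simps)
  have pow_k: "real n ^ k = real n * real n ^ (k - 1)"
    using assms(2) by (cases k) (auto simp: k_def)
  have "((1 - \<beta>) * real n) ^ k \<le> real N ^ k"
    using N_ge assms(8) by (intro power_mono) auto
  moreover have "real k ^ 2 * real N ^ (k - 1) \<le> real k ^ 2 * real n ^ (k - 1)"
    using N_le by (intro mult_left_mono power_mono) auto
  moreover have "real N ^ k - real k ^ 2 * real N ^ (k - 1)
                   \<le> real (card {xs. length xs = k \<and> distinct xs \<and> set xs \<subseteq> V2 - U})"
    using card_distinct_lists_ge[of "V2 - U" k] finV2 by (simp add: N_def)
  moreover have "real (card {xs. length xs = k \<and> distinct xs \<and> set xs \<subseteq> V2 - U})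
                   - real (card A) * (\<alpha> * real n ^ k)
                 \<le> real (card (common_link_lists k V2 H A U))"
    using card_common_link_lists_ge[OF assms(1,3-6), of U] by (simp add: k_def)
  moreover have "\<gamma> * real n ^ k = ((1 - \<beta>) * real n) ^ k - real (card A) * (\<alpha> * real n ^ k)"
    unfolding \<gamma>_def power_mult_distrib by (simp add: algebra_simps)
  ultimately have "\<gamma> * real n ^ k - real k ^ 2 * real n ^ (k - 1)
                     \<le> real (card (common_link_lists k V2 H A U))"
    by linarith
  moreover have "real k ^ 2 * real n ^ (k - 1) \<le> \<gamma> * real n / 2 * real n ^ (k - 1)"
    using assms(10) by (intro mult_right_mono) (auto simp: \<gamma>_def k_def)
  moreover have "\<gamma> * real n / 2 * real n ^ (k - 1) = \<gamma> / 2 * real n ^ k"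
    by (simp add: pow_k)
  ultimately have "\<gamma> / 2 * real n ^ k \<le> real (card (common_link_lists k V2 H A U))"
    by linarith
  then show ?thesis by (simp add: \<gamma>_def k_def)
qed

lemma common_link_density_pos:
  fixes \<alpha> :: real
  assumes "k \<ge> 2" "\<alpha> \<ge> 0" "\<alpha> * real a < 1"
  defines "\<beta> \<equiv> (1 - \<alpha> * real a) / real k"
  shows "\<beta> < 1" "0 < (1 - \<beta>) ^ k - real a * \<alpha>"
proof -
  have \<beta>_pos: "0 < \<beta>" using assms(1,3) by (simp add: \<beta>_def)
  have "\<beta> \<le> 1 / real k" using assms(1,2) by (simp add: \<beta>_def divide_right_mono)
  also have "\<dots> < 1" using assms(1) by simp
  finally show "\<beta> < 1" .
  then have "1 + real k * (- \<beta>) < (1 + (- \<beta>)) ^ k"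
    using \<beta>_pos assms(1) by (intro strict_Bernoulli_inequality) auto
  moreover have "real a * \<alpha> = 1 - real k * \<beta>" using assms(1) by (simp add: \<beta>_def)
  ultimately show "0 < (1 - \<beta>) ^ k - real a * \<alpha>" by simp
qed

lemma common_link_boxes_rank_ge_3:
  fixes \<alpha> :: real
  assumes sb: "semibipartite r m n V1 V2 H" and "r \<ge> 3" "\<alpha> \<ge> 0" "\<alpha> * real a < 1"
    and deg: "\<forall>v\<in>V1. (1 - \<alpha>) * real (n choose (r - 1)) \<le> real (degree H v)"
  defines "\<beta> \<equiv> (1 - \<alpha> * real a) / real (r - 1)"
  defines "g \<equiv> (1 - \<beta>) ^ (r - 1) - real a * \<alpha>"
  assumes large: "2 * real (r - 1) ^ 2 \<le> g * real n"
    and dense: "\<And>E. E \<subseteq> {xs. set xs \<subseteq> V2 \<and> length xs = r - 1} \<Longrightarrow> g / 2 * real n ^ (r - 1) \<le> real (card E)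
                  \<Longrightarrow> \<exists>T. (\<forall>i<r - 1. T i \<subseteq> V2 \<and> card (T i) = t) \<and> box_lists (r - 1) T \<subseteq> E"
  shows "common_link_boxes r a t (\<beta> * real n) V1 V2 H"
  unfolding common_link_boxes_def
proof (intro allI impI)
  fix A U assume A: "A \<subseteq> V1" "card A = a" and U: "U \<subseteq> V2" "real (card U) \<le> \<beta> * real n"
  have "finite A" using sb A(1) by (auto simp: semibipartite_def intro: finite_subset)
  have "\<beta> < 1" using common_link_density_pos(1)[of "r - 1" \<alpha> a] assms(2-4) by (simp add: \<beta>_def)
  moreover have "\<forall>v\<in>A. (1 - \<alpha>) * real (n choose (r - 1)) \<le> real (degree H v)" using deg A(1) by blast
  ultimately have "g / 2 * real n ^ (r - 1) \<le> real (card (common_link_lists (r - 1) V2 H A U))"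
    using card_common_link_lists_ge_density[OF sb _ assms(3) A(1) \<open>finite A\<close> _ U(1) _ U(2)] large
      assms(2) A(2) by (simp add: g_def)
  moreover have "common_link_lists (r - 1) V2 H A U \<subseteq> {xs. set xs \<subseteq> V2 \<and> length xs = r - 1}"
    by (auto simp: common_link_lists_def)
  ultimately obtain T where "\<forall>i<r - 1. T i \<subseteq> V2 \<and> card (T i) = t"
      "box_lists (r - 1) T \<subseteq> common_link_lists (r - 1) V2 H A U"
    using dense by blast
  then show "\<exists>T. (\<forall>i<r - 1. card (T i) = t) \<and> box_lists (r - 1) T \<subseteq> common_link_lists (r - 1) V2 H A U"
    by blast
qed

lemma eventually_common_link_boxes_rank_ge_3:
  fixes \<alpha> :: real
  assumes "r \<ge> 3" "t \<ge> 1" "\<alpha> \<ge> 0" "\<alpha> * real a < 1"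
  shows "\<exists>n0. \<forall>n\<ge>n0. \<forall>m V1 V2 (H :: 'a set set). semibipartite r m n V1 V2 H \<longrightarrow>
           (\<forall>v\<in>V1. (1 - \<alpha>) * real (n choose (r - 1)) \<le> real (degree H v)) \<longrightarrow>
           common_link_boxes r a t ((1 - \<alpha> * real a) / real (r - 1) * real n) V1 V2 H"
proof -
  define k where "k = r - 1"
  define g where "g = (1 - (1 - \<alpha> * real a) / real k) ^ k - real a * \<alpha>"
  have "k \<ge> 2" using assms(1) by (simp add: k_def)
  then have "g / 2 > 0" using common_link_density_pos(2)[OF _ assms(3,4)] by (simp add: g_def)
  from dense_lists_contain_box[OF this assms(2), of k]
  obtain N where N: "\<forall>(V :: 'a set) E. finite V \<longrightarrow> N \<le> card V \<longrightarrow>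
      E \<subseteq> {xs. set xs \<subseteq> V \<and> length xs = k} \<longrightarrow> g / 2 * real (card V) ^ k \<le> real (card E) \<longrightarrow>
      (\<exists>T. (\<forall>i<k. T i \<subseteq> V \<and> card (T i) = t) \<and> box_lists k T \<subseteq> E)"
    by (elim exE)
  show ?thesis
  proof (intro exI[of _ "max N (nat \<lceil>2 * real k ^ 2 / g\<rceil>)"] allI impI)
    fix n m V1 V2 and H :: "'a set set"
    assume n: "max N (nat \<lceil>2 * real k ^ 2 / g\<rceil>) \<le> n" and sb: "semibipartite r m n V1 V2 H"
      and deg: "\<forall>v\<in>V1. (1 - \<alpha>) * real (n choose (r - 1)) \<le> real (degree H v)"
    have finV2: "finite V2" and card_V2: "card V2 = n" using sb by (auto simp: semibipartite_def)
    have "2 * real k ^ 2 \<le> g * real n"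
      using n \<open>g / 2 > 0\<close> by (simp add: field_simps)
    with N finV2 card_V2 n show "common_link_boxes r a t ((1 - \<alpha> * real a) / real (r - 1) * real n) V1 V2 H"
      by (intro common_link_boxes_rank_ge_3[OF sb assms(1,3,4) deg]) (auto simp: g_def k_def)
  qed
qed

text \<open>For r = 2 the density \<open>(1 - \<beta>)^(r-1) - a \<alpha>\<close> of common link lists vanishes, so
  that case is counted directly.\<close>
lemma eventually_common_link_boxes:
  fixes \<alpha> :: real
  assumes "r \<ge> 2" "t \<ge> 1" "\<alpha> \<ge> 0" "\<alpha> * real a < 1"
  shows "\<exists>n0. \<forall>n\<ge>n0. \<forall>m V1 V2 (H :: 'a set set). semibipartite r m n V1 V2 H \<longrightarrow>
           (\<forall>v\<in>V1. (1 - \<alpha>) * real (n choose (r - 1)) \<le> real (degree H v)) \<longrightarrow>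
           common_link_boxes r a t ((1 - \<alpha> * real a) / real (r - 1) * real n - real t) V1 V2 H"
proof (cases "r = 2")
  case True
  show ?thesis
  proof (intro exI[of _ 0] allI impI)
    fix n m V1 V2 and H :: "'a set set"
    assume "semibipartite r m n V1 V2 H"
      "\<forall>v\<in>V1. (1 - \<alpha>) * real (n choose (r - 1)) \<le> real (degree H v)"
    with True have "common_link_boxes 2 a t ((1 - \<alpha> * real a) * real n - real t) V1 V2 H"
      using common_link_boxes_rank_2[OF _ assms(3)] by simp
    with True show "common_link_boxes r a t ((1 - \<alpha> * real a) / real (r - 1) * real n - real t) V1 V2 H"
      by simp
  qed
next
  case False
  with assms(1) have "r \<ge> 3" by simp
  from eventually_common_link_boxes_rank_ge_3[OF this assms(2-4)]
  obtain n0 where n0: "\<forall>n\<ge>n0. \<forall>m V1 V2 (H :: 'a set set). semibipartite r m n V1 V2 H \<longrightarrow>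
      (\<forall>v\<in>V1. (1 - \<alpha>) * real (n choose (r - 1)) \<le> real (degree H v)) \<longrightarrow>
      common_link_boxes r a t ((1 - \<alpha> * real a) / real (r - 1) * real n) V1 V2 H"
    by blast
  show ?thesis
  proof (intro exI[of _ n0] allI impI)
    fix n m V1 V2 and H :: "'a set set"
    assume "n0 \<le> n" "semibipartite r m n V1 V2 H"
      "\<forall>v\<in>V1. (1 - \<alpha>) * real (n choose (r - 1)) \<le> real (degree H v)"
    with n0 have "common_link_boxes r a t ((1 - \<alpha> * real a) / real (r - 1) * real n) V1 V2 H"
      by blast
    then show "common_link_boxes r a t ((1 - \<alpha> * real a) / real (r - 1) * real n - real t) V1 V2 H"
      by (rule common_link_boxes_mono[rotated]) simp
  qed
qed

section \<open>Greedy packing of ordered copies\<close>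

lemma common_link_box_transversal_in_edges:
  assumes "box_lists k T \<subseteq> common_link_lists k V2 H A U" "f 0 \<in> A" "\<And>i. i < k \<Longrightarrow> f (Suc i) \<in> T i"
  shows "f ` {..<Suc k} \<in> H"
proof -
  have "map (\<lambda>i. f (Suc i)) [0..<k] \<in> box_lists k T"
    using assms(3) by (rule map_in_box_lists)
  with assms(1) have "map (\<lambda>i. f (Suc i)) [0..<k] \<in> common_link_lists k V2 H A U" ..
  with assms(2) have "insert (f 0) ((\<lambda>i. f (Suc i)) ` {..<k}) \<in> H"
    by (auto simp: common_link_lists_def atLeast0LessThan)
  then show ?thesis by (simp add: lessThan_Suc_eq_insert_0 image_image)
qed

lemma ordered_copy_case_nat:
  assumes "V1 \<inter> V2 = {}" "A \<subseteq> V1" "finite A" "card A = s 0"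
    and W: "\<And>i. i < k \<Longrightarrow> W i \<subseteq> V2 \<and> finite (W i) \<and> card (W i) = s (Suc i)"
    and disj: "\<And>i j. i < k \<Longrightarrow> j < k \<Longrightarrow> i \<noteq> j \<Longrightarrow> W i \<inter> W j = {}"
    and edges: "\<And>f. f 0 \<in> A \<Longrightarrow> (\<And>i. i < k \<Longrightarrow> f (Suc i) \<in> W i) \<Longrightarrow> f ` {..<Suc k} \<in> H"
  shows "ordered_copy (Suc k) s V1 V2 H (case_nat A W)"
  unfolding ordered_copy_def
proof (intro conjI allI impI)
  fix i assume "i < Suc k"
  then show "finite (case_nat A W i)" "card (case_nat A W i) = s i"
    using assms(3,4) W by (cases i; simp)+
next
  fix i j assume ij: "i < Suc k" "j < Suc k" "i \<noteq> j"
  have "A \<inter> W l = {}" if "l < k" for l using W[OF that] assms(1,2) by blast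
  with ij disj show "case_nat A W i \<inter> case_nat A W j = {}"
    by (cases i; cases j) (auto simp: Int_commute)
next
  fix i assume "1 \<le> i \<and> i < Suc k"
  then show "case_nat A W i \<subseteq> V2" using W by (cases i) auto
next
  fix f assume "\<forall>i<Suc k. f i \<in> case_nat A W i"
  then show "f ` {..<Suc k} \<in> H" by (intro edges) (auto dest: spec[of _ 0] spec[of _ "Suc _"])
qed (use assms(2) in simp)

lemma obtain_subsets_with_card:
  assumes "\<And>i. i < k \<Longrightarrow> n i \<le> card (T i)"
  obtains W where "\<And>i. i < k \<Longrightarrow> W i \<subseteq> T i \<and> card (W i) = n i \<and> finite (W i)"
proof -
  have "\<forall>i. \<exists>X. i < k \<longrightarrow> X \<subseteq> T i \<and> card X = n i \<and> finite X"
    using assms by (meson obtain_subset_with_card_n)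
  then obtain W where "\<forall>i. i < k \<longrightarrow> W i \<subseteq> T i \<and> card (W i) = n i \<and> finite (W i)"
    by (rule choice[THEN exE])
  with that show thesis by blast
qed

lemma ordered_copy_from_common_link_box:
  assumes "V1 \<inter> V2 = {}" "r \<ge> 1" "A \<subseteq> V1" "finite A" "card A = s 0"
    and T: "\<And>i. i < r - 1 \<Longrightarrow> T i \<noteq> {} \<and> s (Suc i) \<le> card (T i)"
    and box: "box_lists (r - 1) T \<subseteq> common_link_lists (r - 1) V2 H A U"
  shows "\<exists>W. ordered_copy r s V1 V2 H W \<and> copy_vertices r W \<subseteq> A \<union> (V2 - U)"
proof -
  define k where "k = r - 1"
  have r: "r = Suc k" using assms(2) by (simp add: k_def)
  have T_sub: "T i \<subseteq> V2 - U" if "i < k" for i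
    using box T that by (intro box_lists_subset_imp_subset[of k T]) (auto simp: k_def common_link_lists_def)
  have T_disj: "T i \<inter> T j = {}" if "i < k" "j < k" "i \<noteq> j" for i j
    using box T that by (intro box_lists_subset_distinct_imp_disjoint[of k T])
      (auto simp: k_def common_link_lists_def)
  obtain W where W: "\<And>i. i < k \<Longrightarrow> W i \<subseteq> T i \<and> card (W i) = s (Suc i) \<and> finite (W i)"
    using obtain_subsets_with_card[of k "\<lambda>i. s (Suc i)" T] T by (auto simp: k_def)
  have "ordered_copy (Suc k) s V1 V2 H (case_nat A W)"
  proof (rule ordered_copy_case_nat[where s = s, OF assms(1,3-5)])
    show "W i \<subseteq> V2 \<and> finite (W i) \<and> card (W i) = s (Suc i)" if "i < k" for i
      using W[OF that] T_sub[OF that] by blast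
    show "W i \<inter> W j = {}" if "i < k" "j < k" "i \<noteq> j" for i j
      using W[OF that(1)] W[OF that(2)] T_disj[OF that] by blast
    show "f ` {..<Suc k} \<in> H" if "f 0 \<in> A" "\<And>i. i < k \<Longrightarrow> f (Suc i) \<in> W i" for f
      using box W that by (intro common_link_box_transversal_in_edges[of k T]) (auto simp: k_def)
  qed
  moreover have "copy_vertices (Suc k) (case_nat A W) \<subseteq> A \<union> (V2 - U)"
    using W T_sub by (fastforce simp: copy_vertices_def less_Suc_eq_0_disj)
  ultimately show ?thesis unfolding r by blast
qed

lemma card_UN_Int_le:
  assumes "finite I" "\<And>i. i \<in> I \<Longrightarrow> card (F i \<inter> X) \<le> b"
  shows "card ((\<Union>i\<in>I. F i) \<inter> X) \<le> card I * b"
proof -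
  have "card ((\<Union>i\<in>I. F i) \<inter> X) = card (\<Union>i\<in>I. F i \<inter> X)" by (simp add: Int_UN_distrib2)
  also have "\<dots> \<le> (\<Sum>i\<in>I. card (F i \<inter> X))" using assms(1) by (rule card_UN_le)
  also have "\<dots> \<le> card I * b" using sum_bounded_above[OF assms(2)] by simp
  finally show ?thesis .
qed

lemma ordered_copy_vertices:
  assumes "ordered_copy r s V1 V2 H W" "V1 \<inter> V2 = {}" "r \<ge> 1"
  shows "finite (copy_vertices r W)" "copy_vertices r W \<subseteq> V1 \<union> V2"
    and "card (copy_vertices r W \<inter> V1) \<le> s 0"
    and "card (copy_vertices r W \<inter> V2) \<le> (\<Sum>l\<in>{1..<r}. s l)"
proof -
  have fin: "\<And>i. i < r \<Longrightarrow> finite (W i) \<and> card (W i) = s i" and "W 0 \<subseteq> V1"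
    and V2: "\<And>l. 1 \<le> l \<Longrightarrow> l < r \<Longrightarrow> W l \<subseteq> V2"
    using assms(1) by (auto simp: ordered_copy_def)
  have parts: "x \<in> W 0 \<and> x \<in> V1 \<or> (\<exists>l\<in>{1..<r}. x \<in> W l \<and> x \<in> V2)"
    if "x \<in> copy_vertices r W" for x
  proof -
    from that obtain i where "i < r" "x \<in> W i" by (auto simp: copy_vertices_def)
    with \<open>W 0 \<subseteq> V1\<close> V2[of i] show ?thesis by (cases "i = 0") auto
  qed
  show "finite (copy_vertices r W)" using fin by (simp add: copy_vertices_def)
  show "copy_vertices r W \<subseteq> V1 \<union> V2" using parts by blast
  have "copy_vertices r W \<inter> V1 \<subseteq> W 0" using parts assms(2) by blast
  then have "card (copy_vertices r W \<inter> V1) \<le> card (W 0)"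
    using fin[of 0] assms(3) by (intro card_mono) auto
  then show "card (copy_vertices r W \<inter> V1) \<le> s 0" using fin[of 0] assms(3) by simp
  have "copy_vertices r W \<inter> V2 \<subseteq> (\<Union>l\<in>{1..<r}. W l)" using parts assms(2) by blast
  then have "card (copy_vertices r W \<inter> V2) \<le> card (\<Union>l\<in>{1..<r}. W l)"
    using fin by (intro card_mono) auto
  also have "\<dots> \<le> (\<Sum>l\<in>{1..<r}. card (W l))" by (rule card_UN_le) simp
  also have "\<dots> = (\<Sum>l\<in>{1..<r}. s l)" using fin by (intro sum.cong) auto
  finally show "card (copy_vertices r W \<inter> V2) \<le> (\<Sum>l\<in>{1..<r}. s l)" .
qed

lemma has_disjoint_ordered_copies_greedy:
  assumes "V1 \<inter> V2 = {}" "r \<ge> 1"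
    and step: "\<And>j U. j < M \<Longrightarrow> U \<subseteq> V1 \<union> V2 \<Longrightarrow> finite U \<Longrightarrow> card (U \<inter> V1) \<le> j * s 0
                 \<Longrightarrow> card (U \<inter> V2) \<le> j * (\<Sum>l\<in>{1..<r}. s l)
                 \<Longrightarrow> \<exists>W. ordered_copy r s V1 V2 H W \<and> copy_vertices r W \<inter> U = {}"
  shows "has_disjoint_ordered_copies r s M V1 V2 H"
proof -
  have "\<exists>Ws. (\<forall>i<j. ordered_copy r s V1 V2 H (Ws i)) \<and>
          (\<forall>i<j. \<forall>i'<j. i \<noteq> i' \<longrightarrow> copy_vertices r (Ws i) \<inter> copy_vertices r (Ws i') = {})"
    if "j \<le> M" for j
    using that
  proof (induction j)
    case 0
    then show ?case by simp
  next
    case (Suc j)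
    then obtain Ws where copies: "\<forall>i<j. ordered_copy r s V1 V2 H (Ws i)"
      and disjoint: "\<forall>i<j. \<forall>i'<j. i \<noteq> i' \<longrightarrow> copy_vertices r (Ws i) \<inter> copy_vertices r (Ws i') = {}"
      by auto
    note vertices = ordered_copy_vertices[OF copies[rule_format] assms(1,2)]
    define U where "U = (\<Union>i<j. copy_vertices r (Ws i))"
    have "U \<subseteq> V1 \<union> V2" "finite U" using vertices(1,2) by (auto simp: U_def)
    moreover have "card (U \<inter> V1) \<le> j * s 0" "card (U \<inter> V2) \<le> j * (\<Sum>l\<in>{1..<r}. s l)"
      unfolding U_def using vertices(3,4) by (auto intro!: card_UN_Int_le[of "{..<j}", simplified])
    ultimately obtain W where W: "ordered_copy r s V1 V2 H W" "copy_vertices r W \<inter> U = {}"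
      using step[of j U] Suc.prems by auto
    have "copy_vertices r W \<inter> copy_vertices r (Ws i) = {}" if "i < j" for i
      using W(2) that by (auto simp: U_def)
    then show ?case
      using copies disjoint W(1)
      by (intro exI[of _ "Ws(j := W)"]) (auto simp: less_Suc_eq Int_commute)
  qed
  then show ?thesis unfolding has_disjoint_ordered_copies_def by blast
qed

lemma used_vertices_budget:
  fixes \<alpha> :: real
  assumes "j < m div s0" "t \<le> \<sigma>" "r \<ge> 2"
    and "real m \<le> (1 - \<alpha> * real s0) * real s0 / (real (r - 1) * real \<sigma>) * real n"
  shows "real (j * \<sigma>) \<le> (1 - \<alpha> * real s0) / real (r - 1) * real n - real t"
proof -
  have s0: "s0 > 0" using assms(1) by (cases "s0 = 0") auto
  have \<sigma>: "\<sigma> > 0"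
  proof (rule ccontr)
    assume "\<not> \<sigma> > 0"
    then have "m = 0" using assms(4) by simp
    with assms(1) show False by simp
  qed
  have "real (Suc j) * real s0 \<le> real m"
    using assms(1) s0 by (metis less_eq_div_iff_mult_less_eq Suc_leI of_nat_mono of_nat_mult)
  then have "(real j + 1) * real s0 * real \<sigma> \<le> real m * real \<sigma>"
    by (intro mult_right_mono) (simp_all add: add.commute)
  then have "(real j + 1) * real \<sigma> \<le> real m * real \<sigma> / real s0"
    using s0 by (simp add: field_simps)
  also have "\<dots> \<le> (1 - \<alpha> * real s0) / real (r - 1) * real n"
    using assms(3,4) s0 \<sigma> by (simp add: field_simps)
  finally show ?thesis using assms(2) by (simp add: algebra_simps)
qed

lemma has_disjoint_ordered_copies_of_common_link_boxes:
  fixes \<alpha> :: real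
  assumes sb: "semibipartite r m n V1 V2 H" and r: "r \<ge> 2"
    and t: "\<And>i. i < r \<Longrightarrow> s i \<le> t" "t \<ge> 1" "t \<le> (\<Sum>i<r. s i) - s 0"
    and m: "real m \<le> (1 - \<alpha> * real (s 0)) * real (s 0)
                         / (real (r - 1) * real ((\<Sum>i<r. s i) - s 0)) * real n"
    and boxes: "common_link_boxes r (s 0) t ((1 - \<alpha> * real (s 0)) / real (r - 1) * real n - real t) V1 V2 H"
  shows "has_disjoint_ordered_copies r s (m div s 0) V1 V2 H"
proof -
  have disj: "V1 \<inter> V2 = {}" and finV1: "finite V1" and card_V1: "card V1 = m"
    using sb by (auto simp: semibipartite_def)
  have "(\<Sum>i<r. s i) = s 0 + (\<Sum>l\<in>{1..<r}. s l)"
    using r by (simp add: atLeast0LessThan[symmetric] sum.atLeast_Suc_lessThan)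
  then have \<sigma>: "(\<Sum>i<r. s i) - s 0 = (\<Sum>l\<in>{1..<r}. s l)" by simp
  show ?thesis
  proof (rule has_disjoint_ordered_copies_greedy[OF disj])
    show "r \<ge> 1" using r by simp
    fix j U
    assume j: "j < m div s 0" and U: "U \<subseteq> V1 \<union> V2" "finite U" "card (U \<inter> V1) \<le> j * s 0"
      "card (U \<inter> V2) \<le> j * (\<Sum>l\<in>{1..<r}. s l)"
    have "Suc j * s 0 \<le> m div s 0 * s 0" using j by (intro mult_le_mono1) simp
    also have "\<dots> \<le> m" by simp
    finally have "card (U \<inter> V1) + s 0 \<le> m" using U(3) by simp
    moreover have "card (V1 - U) = card V1 - card (U \<inter> V1)"
      using finV1 by (metis Int_commute card_Diff_subset_Int finite_Int)
    ultimately have "s 0 \<le> card (V1 - U)" using card_V1 by simp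
    then obtain A where A: "A \<subseteq> V1 - U" "card A = s 0" "finite A"
      by (meson obtain_subset_with_card_n)
    have "real (card (U \<inter> V2)) \<le> (1 - \<alpha> * real (s 0)) / real (r - 1) * real n - real t"
      using used_vertices_budget[OF j t(3) r m] U(4) \<sigma> by (simp add: order_trans[OF of_nat_mono])
    then obtain T where T: "\<forall>i<r - 1. card (T i) = t"
        "box_lists (r - 1) T \<subseteq> common_link_lists (r - 1) V2 H A (U \<inter> V2)"
      using boxes A unfolding common_link_boxes_def by blast
    have "T i \<noteq> {} \<and> s (Suc i) \<le> card (T i)" if "i < r - 1" for i
      using T(1) t(1,2) that by fastforce
    from ordered_copy_from_common_link_box[of V1 V2 r A s T H "U \<inter> V2", OF disj _ _ A(3,2) this T(2)]
    obtain W where "ordered_copy r s V1 V2 H W" "copy_vertices r W \<subseteq> A \<union> (V2 - U \<inter> V2)"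
      using r A(1) by auto
    with A(1) show "\<exists>W. ordered_copy r s V1 V2 H W \<and> copy_vertices r W \<inter> U = {}" by blast
  qed
qed

theorem lemma5p3:
  fixes r :: nat and s :: "nat \<Rightarrow> nat" and \<alpha> :: real
  assumes "r \<ge> 2"
    and "s 0 \<ge> 2"
    and "\<And>i j. i \<le> j \<Longrightarrow> j < r \<Longrightarrow> s i \<le> s j"
    and "0 \<le> \<alpha>" and "\<alpha> < 1 / real (s 0)"
  shows "\<exists>n0::nat. \<forall>n\<ge>n0. \<forall>(m::nat) (V1::'a set) V2 H.
     semibipartite r m n V1 V2 H \<and>
     real m \<le> (1 - \<alpha> * real (s 0)) * real (s 0)
               / (real (r - 1) * real ((\<Sum>i<r. s i) - s 0)) * real n \<and>
     (\<forall>v\<in>V1. real (degree H v) \<ge> (1 - \<alpha>) * real (n choose (r - 1)))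
     \<longrightarrow> has_disjoint_ordered_copies r s (m div s 0) V1 V2 H"
proof -
  define t where "t = s (r - 1)"
  have s_le_t: "s i \<le> t" if "i < r" for i using assms(3) that by (simp add: t_def)
  have "s 0 + t \<le> (\<Sum>i<r. s i)"
    using sum_mono2[of "{..<r}" "{0, r - 1}" s] assms(1) by (simp add: t_def)
  then have t_le: "t \<le> (\<Sum>i<r. s i) - s 0" by simp
  have "t \<ge> 1" using s_le_t[of 0] assms(1,2) by simp
  have "\<alpha> * real (s 0) < 1" using assms(2,5) by (simp add: field_simps)
  from eventually_common_link_boxes[OF assms(1) \<open>t \<ge> 1\<close> assms(4) this]
  obtain n0 where n0: "\<forall>n\<ge>n0. \<forall>m V1 V2 (H :: 'a set set). semibipartite r m n V1 V2 H \<longrightarrow>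
      (\<forall>v\<in>V1. (1 - \<alpha>) * real (n choose (r - 1)) \<le> real (degree H v)) \<longrightarrow>
      common_link_boxes r (s 0) t ((1 - \<alpha> * real (s 0)) / real (r - 1) * real n - real t) V1 V2 H"
    by (elim exE)
  show ?thesis
    using n0 has_disjoint_ordered_copies_of_common_link_boxes[OF _ assms(1) s_le_t \<open>t \<ge> 1\<close> t_le]
    by (intro exI[of _ n0] allI impI) (elim conjE, blast)
qed

end
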